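(* Let $0<q<1$, $\Re\eta>-1$, $\mu\ge0$, $\lambda\ge1$, and let $\phi(z)=1+\sum_{n\ge1}E_nz^n$ be analytic in $\Delta$ with $\Re\phi>0$, $\phi(0)=1$, $E_1>0$. Put $M_k=\mu-(\mu-1)\widetilde{[k]}_q$ and $N=\mu-(\mu-1)\widetilde{[2]}_q^{\,2}$, $$\Omega=2(\lambda\widetilde{[3]}_q-1)M_3L_3+\lambda\big(\lambda M_2^2-N\big)\widetilde{[2]}_q^{\,2}L_2^2,$$ $$\Theta=2(\lambda\widetilde{[3]}_q-1)M_3E_1^2L_3+\lambda\big\{\lambda M_2^2(E_1^2+2E_1-2E_2)-NE_1^2\big\}\widetilde{[2]}_q^{\,2}L_2^2,$$ and assume $M_2,M_3,\Omega,\Theta$ are nonzero. If $f(z)=z+\sum_{n\ge2}a_nz^n$ belongs to $\widetilde{\mathcal{S}^*_{\Sigma}}{}^{\eta}_q(\mu,\lambda;\phi)$, then $$|a_2|\le\min\left\{\frac{E_1}{\lambda|M_2L_2|\widetilde{[2]}_q},\ \sqrt{\frac{2(|E_2-E_1|+E_1)}{|\Omega|}},\ \frac{E_1\sqrt{2E_1}}{\sqrt{|\Theta|}}\right\}$$ and $$|a_3|\le\frac{E_1}{(\lambda\widetilde{[3]}_q-1)|M_3L_3|}+\min\left\{\frac{E_1^2}{\lambda^2M_2^2\widetilde{[2]}_q^{\,2}|L_2|^2},\ \frac{2(|E_2-E_1|+E_1)}{|\Omega|}\right\}.$$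
   Context: $\Delta=\{z\in\mathbb{C}:|z|<1\}$. $\Sigma$ denotes the class of analytic $f(z)=z+\sum_{n\ge2}a_nz^n$ on $\Delta$ that are univalent and whose inverse $g=f^{-1}$ (with $g(w)=w-a_2w^2+(2a_2^2-a_3)w^3-\cdots$) extends univalently to $\Delta$. For $0<q<1$ and $\chi\in\mathbb{C}$, $\widetilde{[\chi]}_q=\frac{q^{\chi}-q^{-\chi}}{q-q^{-1}}$ (for $n\in\mathbb N$, $\widetilde{[n]}_q=\sum_{k=0}^{n-1}q^{n-1-2k}$). The symmetric $q$-derivative: $\widetilde{\mathcal D}_qF(z)=\frac{F(qz)-F(q^{-1}z)}{(q-q^{-1})z}$ ($z\neq0$), $\widetilde{\mathcal D}_qF(0)=F'(0)$. For $\Re\eta>-1$, the generalized Bernardi operator acts on $f=z+\sum_{n\ge2}a_nz^n$ by $\mathcal J^{\eta}_qf(z)=z+\sum_{n\ge2}L_na_nz^n$, where $L_n=\widetilde{[1+\eta]}_q/\widetilde{[n+\eta]}_q$. Subordination $F\prec G$ means $F=G\circ h$ with $h$ analytic on $\Delta$, $h(0)=0$, $|h|<1$. Non-integer powers are principal branches equal to $1$ at the origin. The class $\widetilde{\mathcal{S}^*_{\Sigma}}{}^{\eta}_q(\mu,\lambda;\phi)$ ($\mu\ge0$, $\lambda\ge1$) consists of $f\in\Sigma$, $g=f^{-1}$, such that, writing $F=\mathcal J^\eta_qf$ and $G=\mathcal J^\eta_qg$, $$\left\{\frac{2z[\widetilde{\mathcal D}_qF(z)]^{\lambda}}{F(z)-F(-z)}\right\}^{\mu}\left\{\frac{2\{\widetilde{\mathcal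 D}_q[z\widetilde{\mathcal D}_qF(z)]\}^{\lambda}}{\widetilde{\mathcal D}_q[F(z)-F(-z)]}\right\}^{1-\mu}\prec\phi(z)$$ and the same expression with $F,z$ replaced by $G,w$ is subordinate to $\phi(w)$, for $z,w\in\Delta$. *)

theory Defs
  imports "HOL-Analysis.Analysis"
begin

definition qnum :: "real \<Rightarrow> complex \<Rightarrow> complex" where
  "qnum q c = (complex_of_real q powr c - complex_of_real q powr (-c)) / complex_of_real (q - 1/q)"

definition qnat :: "real \<Rightarrow> nat \<Rightarrow> real" where
  "qnat q n = Re (qnum q (of_nat n))"

definition taylor_coeff :: "(complex \<Rightarrow> complex) \<Rightarrow> nat \<Rightarrow> complex" where
  "taylor_coeff f n = (deriv ^^ n) f 0 / fact n"

definition bern_L :: "real \<Rightarrow> complex \<Rightarrow> nat \<Rightarrow> complex" where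
  "bern_L q \<eta> n = qnum q (1 + \<eta>) / qnum q (of_nat n + \<eta>)"

definition bernardi :: "real \<Rightarrow> complex \<Rightarrow> (complex \<Rightarrow> complex) \<Rightarrow> complex \<Rightarrow> complex" where
  "bernardi q \<eta> f z = z + (\<Sum>n. bern_L q \<eta> (n+2) * taylor_coeff f (n+2) * z ^ (n+2))"

definition symqD :: "real \<Rightarrow> (complex \<Rightarrow> complex) \<Rightarrow> complex \<Rightarrow> complex" where
  "symqD q F z = (if z = 0 then deriv F 0
     else (F (complex_of_real q * z) - F (z / complex_of_real q)) / (complex_of_real (q - 1/q) * z))"

definition odd_quot :: "(complex \<Rightarrow> complex) \<Rightarrow> complex \<Rightarrow> complex" where
  "odd_quot F z = (if z = 0 then 2 * deriv F 0 else (F z - F (-z)) / z)"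

text \<open>Principal power w^a, with w^0 = 1 (the factor is absent when the exponent is 0).\<close>
definition ppow :: "complex \<Rightarrow> real \<Rightarrow> complex" where
  "ppow w a = (if a = 0 then 1 else w powr complex_of_real a)"

text \<open>The defining expression of the class, for F = J f.
  {2z[D_q F]^lam/(F(z)-F(-z))}^mu * {2{D_q[z D_q F]}^lam / D_q[F(z)-F(-z)]}^(1-mu)\<close>
definition class_expr :: "real \<Rightarrow> real \<Rightarrow> real \<Rightarrow> (complex \<Rightarrow> complex) \<Rightarrow> complex \<Rightarrow> complex" where
  "class_expr q \<mu> lam F z =
     ppow (2 * ppow (symqD q F z) lam / odd_quot F z) \<mu> *
     ppow (2 * ppow (symqD q (\<lambda>t. t * symqD q F t) z) lam / symqD q (\<lambda>t. F t - F (-t)) z) (1 - \<mu>)"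

definition subord :: "(complex \<Rightarrow> complex) \<Rightarrow> (complex \<Rightarrow> complex) \<Rightarrow> bool" where
  "subord F G \<longleftrightarrow> (\<exists>h. h holomorphic_on ball 0 1 \<and> h 0 = 0 \<and>
      (\<forall>z\<in>ball 0 1. norm (h z) < 1) \<and> (\<forall>z\<in>ball 0 1. F z = G (h z)))"

definition inv_ext :: "(complex \<Rightarrow> complex) \<Rightarrow> (complex \<Rightarrow> complex) \<Rightarrow> bool" where
  "inv_ext f g \<longleftrightarrow> g holomorphic_on ball 0 1 \<and> inj_on g (ball 0 1) \<and>
      (\<forall>z\<in>ball 0 1. f z \<in> ball 0 1 \<longrightarrow> g (f z) = z)"

definition Sigma_class :: "(complex \<Rightarrow> complex) \<Rightarrow> bool" where
  "Sigma_class f \<longleftrightarrow> f holomorphic_on ball 0 1 \<and> inj_on f (ball 0 1) \<and> f 0 = 0 \<and>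
      deriv f 0 = 1 \<and> (\<exists>g. inv_ext f g)"

definition S_class :: "real \<Rightarrow> complex \<Rightarrow> real \<Rightarrow> real \<Rightarrow> (complex \<Rightarrow> complex) \<Rightarrow> (complex \<Rightarrow> complex) \<Rightarrow> bool" where
  "S_class q \<eta> \<mu> lam \<phi> f \<longleftrightarrow> Sigma_class f \<and>
      subord (class_expr q \<mu> lam (bernardi q \<eta> f)) \<phi> \<and>
      (\<forall>g. inv_ext f g \<longrightarrow> subord (class_expr q \<mu> lam (bernardi q \<eta> g)) \<phi>)"

end

theory Submission
  imports Defs "HOL-Complex_Analysis.Complex_Analysis"
begin

text \<open>Write \<open>f(z) = z + a\<^sub>2 z\<^sup>2 + a\<^sub>3 z\<^sup>3 + \<dots>\<close>. Expanding the defining expression of the class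
  for \<open>F = J f\<close> gives \<open>1 + \<alpha> a\<^sub>2 z + (\<beta> a\<^sub>3 + K a\<^sub>2\<^sup>2) z\<^sup>2 + O(z\<^sup>3)\<close>, and for the inverse \<open>g\<close> the
  same holds with \<open>a\<^sub>2, a\<^sub>3\<close> replaced by \<open>-a\<^sub>2, 2a\<^sub>2\<^sup>2 - a\<^sub>3\<close>. Writing both subordinations
  through Schwarz functions with coefficients \<open>c\<^sub>1, c\<^sub>2\<close> and \<open>d\<^sub>1, d\<^sub>2\<close>, which satisfy
  \<open>|c\<^sub>1| \<le> 1\<close> and \<open>|c\<^sub>2| \<le> 1 - |c\<^sub>1|\<^sup>2\<close>, compares coefficients: \<open>\<alpha> a\<^sub>2 = E\<^sub>1 c\<^sub>1 = -E\<^sub>1 d\<^sub>1\<close>,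
  and the sum and the difference of the two second-order equations give the bounds on
  \<open>|a\<^sub>2|\<^sup>2\<close> and on \<open>|a\<^sub>3 - a\<^sub>2\<^sup>2|\<close>.\<close>

section \<open>Truncated expansions at the origin\<close>

text \<open>\<open>expands2\<close> and \<open>expands3\<close> only constrain a punctured neighbourhood of 0, since the
  q-derivative and the odd quotient are given at 0 by separate formulas. The outer function of a
  composition must be expanded on a full neighbourhood with a continuous remainder
  (\<open>taylor2_at\<close>, \<open>taylor3_at\<close>), because the inner function may hit the expansion point.\<close>

definition expands2 :: "(complex \<Rightarrow> complex) \<Rightarrow> complex \<Rightarrow> complex \<Rightarrow> complex \<Rightarrow> bool" where
  "expands2 f a0 a1 a2 \<longleftrightarrow> (\<exists>R c. (R \<longlongrightarrow> c) (at 0) \<and>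
      (\<forall>\<^sub>F z in at 0. f z = a0 + a1*z + a2*z^2 + z^3 * R z))"

definition expands3 :: "(complex \<Rightarrow> complex) \<Rightarrow> complex \<Rightarrow> complex \<Rightarrow> complex \<Rightarrow> complex \<Rightarrow> bool" where
  "expands3 f a0 a1 a2 a3 \<longleftrightarrow> (\<exists>R c. (R \<longlongrightarrow> c) (at 0) \<and>
      (\<forall>\<^sub>F z in at 0. f z = a0 + a1*z + a2*z^2 + a3*z^3 + z^4 * R z))"

definition taylor2_at :: "(complex \<Rightarrow> complex) \<Rightarrow> complex \<Rightarrow> complex \<Rightarrow> complex \<Rightarrow> complex \<Rightarrow> bool" where
  "taylor2_at g w0 b0 b1 b2 \<longleftrightarrow> (\<exists>S. isCont S w0 \<and>
      (\<forall>\<^sub>F w in nhds w0. g w = b0 + b1*(w-w0) + b2*(w-w0)^2 + (w-w0)^3 * S w))"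

definition taylor3_at :: "(complex \<Rightarrow> complex) \<Rightarrow> complex \<Rightarrow> complex \<Rightarrow> complex \<Rightarrow> complex \<Rightarrow> complex \<Rightarrow> bool" where
  "taylor3_at g w0 b0 b1 b2 b3 \<longleftrightarrow> (\<exists>S. isCont S w0 \<and>
      (\<forall>\<^sub>F w in nhds w0. g w = b0 + b1*(w-w0) + b2*(w-w0)^2 + b3*(w-w0)^3 + (w-w0)^4 * S w))"

lemma eventually_at_0_nonzero: "\<forall>\<^sub>F z in at (0::complex). z \<noteq> 0"
  by (simp add: eventually_at_filter)

lemma eventually_at_0_in_unit_ball: "\<forall>\<^sub>F z in at (0::complex). z \<in> ball 0 1"
  unfolding eventually_at_filter eventually_nhds by (intro exI[of _ "ball 0 1"]) auto

lemma expands2_tendsto: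
  assumes "expands2 f a0 a1 a2" shows "(f \<longlongrightarrow> a0) (at 0)"
proof -
  obtain R c where R: "(R \<longlongrightarrow> c) (at 0)"
    and ev: "\<forall>\<^sub>F z in at 0. f z = a0 + a1*z + a2*z^2 + z^3 * R z"
    using assms unfolding expands2_def by blast
  have "((\<lambda>z. a0 + a1*z + a2*z^2 + z^3 * R z) \<longlongrightarrow> a0 + a1*0 + a2*0^2 + 0^3 * c) (at 0)"
    by (intro tendsto_intros R)
  then have "((\<lambda>z. a0 + a1*z + a2*z^2 + z^3 * R z) \<longlongrightarrow> a0) (at 0)" by simp
  then show ?thesis
    by (rule Lim_transform_eventually) (use ev in \<open>simp add: eventually_mono\<close>)
qed

lemma expands2_cong:
  assumes "expands2 f a0 a1 a2" "\<forall>\<^sub>F z in at 0. f z = g z" shows "expands2 g a0 a1 a2"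
proof -
  obtain R c where R: "(R \<longlongrightarrow> c) (at 0)"
    and ev: "\<forall>\<^sub>F z in at 0. f z = a0 + a1*z + a2*z^2 + z^3 * R z"
    using assms unfolding expands2_def by blast
  have "\<forall>\<^sub>F z in at 0. g z = a0 + a1*z + a2*z^2 + z^3 * R z"
    using ev assms(2) by eventually_elim simp
  then show ?thesis using R unfolding expands2_def by blast
qed

lemma expands3_cong:
  assumes "expands3 f a0 a1 a2 a3" "\<forall>\<^sub>F z in at 0. f z = g z" shows "expands3 g a0 a1 a2 a3"
proof -
  obtain R c where R: "(R \<longlongrightarrow> c) (at 0)"
    and ev: "\<forall>\<^sub>F z in at 0. f z = a0 + a1*z + a2*z^2 + a3*z^3 + z^4 * R z"
    using assms unfolding expands3_def by blast
  have "\<forall>\<^sub>F z in at 0. g z = a0 + a1*z + a2*z^2 + a3*z^3 + z^4 * R z"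
    using ev assms(2) by eventually_elim simp
  then show ?thesis using R unfolding expands3_def by blast
qed

lemma expands3_imp_expands2:
  assumes "expands3 f a0 a1 a2 a3" shows "expands2 f a0 a1 a2"
proof -
  obtain R c where R: "(R \<longlongrightarrow> c) (at 0)"
    and ev: "\<forall>\<^sub>F z in at 0. f z = a0 + a1*z + a2*z^2 + a3*z^3 + z^4 * R z"
    using assms unfolding expands3_def by blast
  have "((\<lambda>z. a3 + z * R z) \<longlongrightarrow> a3 + 0 * c) (at 0)" by (intro tendsto_intros R)
  moreover have "\<forall>\<^sub>F z in at 0. f z = a0 + a1*z + a2*z^2 + z^3 * (a3 + z * R z)"
    using ev by eventually_elim (simp add: algebra_simps power_numeral_reduce)
  ultimately show ?thesis unfolding expands2_def by blast
qed

lemma taylor3_at_imp_taylor2_at: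
  assumes "taylor3_at g w0 b0 b1 b2 b3" shows "taylor2_at g w0 b0 b1 b2"
proof -
  obtain S where S: "isCont S w0"
    and ev: "\<forall>\<^sub>F w in nhds w0. g w = b0 + b1*(w-w0) + b2*(w-w0)^2 + b3*(w-w0)^3 + (w-w0)^4 * S w"
    using assms unfolding taylor3_at_def by blast
  have "isCont (\<lambda>w. b3 + (w-w0) * S w) w0" by (intro continuous_intros S)
  moreover have "\<forall>\<^sub>F w in nhds w0.
      g w = b0 + b1*(w-w0) + b2*(w-w0)^2 + (w-w0)^3 * (b3 + (w-w0) * S w)"
    using ev by eventually_elim (simp add: algebra_simps power_numeral_reduce)
  ultimately show ?thesis unfolding taylor2_at_def by blast
qed

lemma taylor3_at_0_imp_expands3:
  assumes "taylor3_at g 0 b0 b1 b2 b3" shows "expands3 g b0 b1 b2 b3"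
proof -
  obtain S where S: "isCont S 0"
    and ev: "\<forall>\<^sub>F w in nhds 0. g w = b0 + b1*(w-0) + b2*(w-0)^2 + b3*(w-0)^3 + (w-0)^4 * S w"
    using assms unfolding taylor3_at_def by blast
  have "\<forall>\<^sub>F z in at 0. g z = b0 + b1*z + b2*z^2 + b3*z^3 + z^4 * S z"
    using ev by (simp add: eventually_at_filter eventually_mono)
  then show ?thesis using S unfolding expands3_def isCont_def by blast
qed

lemma coeff_eq_0_if_eventually_zero:
  fixes G :: "complex \<Rightarrow> complex"
  assumes "\<forall>\<^sub>F z in at 0. c + z * G z = 0" "(G \<longlongrightarrow> l) (at 0)" shows "c = 0"
proof -
  have "((\<lambda>z. c + z * G z) \<longlongrightarrow> c + 0 * l) (at 0)" by (intro tendsto_intros assms)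
  moreover have "((\<lambda>z. c + z * G z) \<longlongrightarrow> 0) (at 0)"
    using assms(1) by (simp add: tendsto_eventually)
  ultimately show ?thesis using tendsto_unique[OF at_neq_bot] by force
qed

lemma expands2_unique:
  assumes "expands2 f a0 a1 a2" "expands2 f b0 b1 b2" shows "a0 = b0 \<and> a1 = b1 \<and> a2 = b2"
proof -
  obtain R c where R: "(R \<longlongrightarrow> c) (at 0)"
    and ev: "\<forall>\<^sub>F z in at 0. f z = a0 + a1*z + a2*z^2 + z^3 * R z"
    using assms(1) unfolding expands2_def by blast
  obtain S d where S: "(S \<longlongrightarrow> d) (at 0)"
    and ev': "\<forall>\<^sub>F z in at 0. f z = b0 + b1*z + b2*z^2 + z^3 * S z"
    using assms(2) unfolding expands2_def by blast
  have E0: "\<forall>\<^sub>F z in at 0. (a0 - b0) + z * ((a1 - b1) + z * ((a2 - b2) + z * (R z - S z))) = 0"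
    using ev ev' by eventually_elim (simp add: algebra_simps power_numeral_reduce)
  have "a0 - b0 = 0"
    by (rule coeff_eq_0_if_eventually_zero[OF E0]) (rule tendsto_intros R S)+
  then have a0: "a0 = b0" by simp
  have E1: "\<forall>\<^sub>F z in at 0. (a1 - b1) + z * ((a2 - b2) + z * (R z - S z)) = 0"
    using E0 eventually_at_0_nonzero by eventually_elim (simp add: a0)
  have "a1 - b1 = 0"
    by (rule coeff_eq_0_if_eventually_zero[OF E1]) (rule tendsto_intros R S)+
  then have a1: "a1 = b1" by simp
  have E2: "\<forall>\<^sub>F z in at 0. (a2 - b2) + z * (R z - S z) = 0"
    using E1 eventually_at_0_nonzero by eventually_elim (simp add: a1)
  have "a2 - b2 = 0"
    by (rule coeff_eq_0_if_eventually_zero[OF E2]) (rule tendsto_intros R S)+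
  then have "a2 = b2" by simp
  with a0 a1 show ?thesis by simp
qed

lemma expands3_unique:
  assumes "expands3 f a0 a1 a2 a3" "expands3 f b0 b1 b2 b3"
  shows "a0 = b0 \<and> a1 = b1 \<and> a2 = b2 \<and> a3 = b3"
proof -
  have low: "a0 = b0" "a1 = b1" "a2 = b2"
    using expands2_unique[OF assms[THEN expands3_imp_expands2]] by auto
  obtain R c where R: "(R \<longlongrightarrow> c) (at 0)"
    and ev: "\<forall>\<^sub>F z in at 0. f z = a0 + a1*z + a2*z^2 + a3*z^3 + z^4 * R z"
    using assms(1) unfolding expands3_def by blast
  obtain S d where S: "(S \<longlongrightarrow> d) (at 0)"
    and ev': "\<forall>\<^sub>F z in at 0. f z = b0 + b1*z + b2*z^2 + b3*z^3 + z^4 * S z"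
    using assms(2) unfolding expands3_def by blast
  have "\<forall>\<^sub>F z in at 0. z^3 * ((a3 - b3) + z * (R z - S z)) = 0"
    using ev ev' by eventually_elim (simp add: low algebra_simps power_numeral_reduce)
  then have "\<forall>\<^sub>F z in at 0. (a3 - b3) + z * (R z - S z) = 0"
    using eventually_at_0_nonzero by eventually_elim simp
  then have "a3 - b3 = 0"
    by (rule coeff_eq_0_if_eventually_zero) (rule tendsto_intros R S)+
  with low show ?thesis by simp
qed

lemma expands2_eqI:
  "expands2 f a0 a1 a2 \<Longrightarrow> a0 = b0 \<Longrightarrow> a1 = b1 \<Longrightarrow> a2 = b2 \<Longrightarrow> expands2 f b0 b1 b2"
  by simp

lemma expands3_eqI:
  "expands3 f a0 a1 a2 a3 \<Longrightarrow> a0 = b0 \<Longrightarrow> a1 = b1 \<Longrightarrow> a2 = b2 \<Longrightarrow> a3 = b3 \<Longrightarrow>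
    expands3 f b0 b1 b2 b3"
  by simp

lemma expands2_const: "expands2 (\<lambda>z. c) c 0 0"
  unfolding expands2_def by (intro exI[of _ "\<lambda>_. 0"] exI[of _ 0]) simp

lemma expands3_ident: "expands3 (\<lambda>z. z) 0 1 0 0"
  unfolding expands3_def by (intro exI[of _ "\<lambda>_. 0"] exI[of _ 0]) simp

lemma expands2_mult:
  assumes "expands2 f a0 a1 a2" "expands2 g b0 b1 b2"
  shows "expands2 (\<lambda>z. f z * g z) (a0*b0) (a0*b1 + a1*b0) (a0*b2 + a1*b1 + a2*b0)"
proof -
  obtain R c where R: "(R \<longlongrightarrow> c) (at 0)"
    and ev: "\<forall>\<^sub>F z in at 0. f z = a0 + a1*z + a2*z^2 + z^3 * R z"
    using assms(1) unfolding expands2_def by blast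
  obtain S d where S: "(S \<longlongrightarrow> d) (at 0)"
    and ev': "\<forall>\<^sub>F z in at 0. g z = b0 + b1*z + b2*z^2 + z^3 * S z"
    using assms(2) unfolding expands2_def by blast
  define T where "T z = a1*b2 + a2*b1 + a2*b2*z + R z * (b0 + b1*z + b2*z^2)
      + S z * (a0 + a1*z + a2*z^2) + z^3 * R z * S z" for z
  have "(T \<longlongrightarrow> a1*b2 + a2*b1 + a2*b2*0 + c * (b0 + b1*0 + b2*0^2)
      + d * (a0 + a1*0 + a2*0^2) + 0^3 * c * d) (at 0)"
    unfolding T_def by (intro tendsto_intros R S)
  moreover have "\<forall>\<^sub>F z in at 0.
      f z * g z = a0*b0 + (a0*b1 + a1*b0)*z + (a0*b2 + a1*b1 + a2*b0)*z^2 + z^3 * T z"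
    using ev ev' by eventually_elim (simp add: T_def algebra_simps power_numeral_reduce)
  ultimately show ?thesis unfolding expands2_def by blast
qed

lemma expands2_mult_ident:
  assumes "expands2 f a0 a1 a2" shows "expands3 (\<lambda>z. z * f z) 0 a0 a1 a2"
proof -
  obtain R c where R: "(R \<longlongrightarrow> c) (at 0)"
    and ev: "\<forall>\<^sub>F z in at 0. f z = a0 + a1*z + a2*z^2 + z^3 * R z"
    using assms unfolding expands2_def by blast
  have "\<forall>\<^sub>F z in at 0. z * f z = 0 + a0*z + a1*z^2 + a2*z^3 + z^4 * R z"
    using ev by eventually_elim (simp add: algebra_simps power_numeral_reduce)
  then show ?thesis using R unfolding expands3_def by blast
qed

lemma expands3_divide_ident:
  assumes "expands3 f 0 a1 a2 a3" shows "expands2 (\<lambda>z. f z / z) a1 a2 a3"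
proof -
  obtain R c where R: "(R \<longlongrightarrow> c) (at 0)"
    and ev: "\<forall>\<^sub>F z in at 0. f z = 0 + a1*z + a2*z^2 + a3*z^3 + z^4 * R z"
    using assms unfolding expands3_def by blast
  have "\<forall>\<^sub>F z in at 0. f z / z = a1 + a2*z + a3*z^2 + z^3 * R z"
    using ev eventually_at_0_nonzero
    by eventually_elim (simp add: field_simps power_numeral_reduce)
  then show ?thesis using R unfolding expands2_def by blast
qed

lemma filterlim_scale_at_0:
  fixes c :: complex assumes "c \<noteq> 0" shows "filterlim (\<lambda>z. c * z) (at 0) (at 0)"
  unfolding filterlim_at using assms
  by (auto simp: eventually_at_filter intro!: tendsto_eq_intros)

lemma expands3_reflect:
  assumes "expands3 f a0 a1 a2 a3" shows "expands3 (\<lambda>z. f (-z)) a0 (-a1) a2 (-a3)"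
proof -
  obtain R c where R: "(R \<longlongrightarrow> c) (at 0)"
    and ev: "\<forall>\<^sub>F z in at 0. f z = a0 + a1*z + a2*z^2 + a3*z^3 + z^4 * R z"
    using assms unfolding expands3_def by blast
  have lim: "filterlim (\<lambda>z::complex. -z) (at 0) (at 0)"
    using filterlim_scale_at_0[of "-1"] by simp
  have "\<forall>\<^sub>F z in at 0. f (-z) = a0 + (-a1)*z + a2*z^2 + (-a3)*z^3 + z^4 * R (-z)"
    using eventually_compose_filterlim[OF ev lim]
    by eventually_elim (simp add: algebra_simps power_numeral_reduce)
  moreover have "((\<lambda>z. R (-z)) \<longlongrightarrow> c) (at 0)" using filterlim_compose[OF R lim] by simp
  ultimately show ?thesis unfolding expands3_def by blast
qed

lemma expands3_diff:
  assumes "expands3 f a0 a1 a2 a3" "expands3 g b0 b1 b2 b3"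
  shows "expands3 (\<lambda>z. f z - g z) (a0-b0) (a1-b1) (a2-b2) (a3-b3)"
proof -
  obtain R c where R: "(R \<longlongrightarrow> c) (at 0)"
    and ev: "\<forall>\<^sub>F z in at 0. f z = a0 + a1*z + a2*z^2 + a3*z^3 + z^4 * R z"
    using assms(1) unfolding expands3_def by blast
  obtain S d where S: "(S \<longlongrightarrow> d) (at 0)"
    and ev': "\<forall>\<^sub>F z in at 0. g z = b0 + b1*z + b2*z^2 + b3*z^3 + z^4 * S z"
    using assms(2) unfolding expands3_def by blast
  have "\<forall>\<^sub>F z in at 0.
      f z - g z = (a0-b0) + (a1-b1)*z + (a2-b2)*z^2 + (a3-b3)*z^3 + z^4 * (R z - S z)"
    using ev ev' by eventually_elim (simp add: algebra_simps)
  moreover have "((\<lambda>z. R z - S z) \<longlongrightarrow> c - d) (at 0)" by (intro tendsto_intros R S)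
  ultimately show ?thesis unfolding expands3_def by blast
qed

lemma expands2_compose:
  assumes "expands2 f a0 a1 a2" "taylor2_at g a0 b0 b1 b2"
  shows "expands2 (\<lambda>z. g (f z)) b0 (b1*a1) (b1*a2 + b2*a1^2)"
proof -
  obtain R c where R: "(R \<longlongrightarrow> c) (at 0)"
    and ev: "\<forall>\<^sub>F z in at 0. f z = a0 + a1*z + a2*z^2 + z^3 * R z"
    using assms(1) unfolding expands2_def by blast
  obtain S where S: "isCont S a0"
    and evg: "\<forall>\<^sub>F w in nhds a0. g w = b0 + b1*(w-a0) + b2*(w-a0)^2 + (w-a0)^3 * S w"
    using assms(2) unfolding taylor2_at_def by blast
  have lim: "(f \<longlongrightarrow> a0) (at 0)" by (rule expands2_tendsto[OF assms(1)])
  define T where "T z = b1 * R z + b2 * (2*a1*(a2 + z*R z) + z*(a2 + z*R z)^2)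
      + (a1 + a2*z + z^2*R z)^3 * S (f z)" for z
  have "(T \<longlongrightarrow> b1 * c + b2 * (2*a1*(a2 + 0*c) + 0*(a2 + 0*c)^2)
      + (a1 + a2*0 + 0^2*c)^3 * S a0) (at 0)"
    unfolding T_def by (intro tendsto_intros R isCont_tendsto_compose[OF S lim])
  moreover have "\<forall>\<^sub>F z in at 0. g (f z) = b0 + (b1*a1)*z + (b1*a2 + b2*a1^2)*z^2 + z^3 * T z"
    using ev eventually_compose_filterlim[OF evg lim]
  proof eventually_elim
    case (elim z)
    have "f z - a0 = z * (a1 + a2*z + z^2*R z)"
      using elim(1) by (simp add: algebra_simps power_numeral_reduce)
    then show ?case
      unfolding elim(2) T_def by (simp add: algebra_simps power_numeral_reduce)
  qed
  ultimately show ?thesis unfolding expands2_def by blast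
qed

lemma expands3_compose:
  assumes "expands3 f 0 a1 a2 a3" "taylor3_at g 0 b0 b1 b2 b3"
  shows "expands3 (\<lambda>z. g (f z)) b0 (b1*a1) (b1*a2 + b2*a1^2) (b1*a3 + 2*b2*a1*a2 + b3*a1^3)"
proof -
  obtain R c where R: "(R \<longlongrightarrow> c) (at 0)"
    and ev: "\<forall>\<^sub>F z in at 0. f z = 0 + a1*z + a2*z^2 + a3*z^3 + z^4 * R z"
    using assms(1) unfolding expands3_def by blast
  obtain S where S: "isCont S 0"
    and evg: "\<forall>\<^sub>F w in nhds 0. g w = b0 + b1*(w-0) + b2*(w-0)^2 + b3*(w-0)^3 + (w-0)^4 * S w"
    using assms(2) unfolding taylor3_at_def by blast
  have lim: "(f \<longlongrightarrow> 0) (at 0)" by (rule expands2_tendsto[OF expands3_imp_expands2[OF assms(1)]])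
  define V where "V z = a2 + a3*z + z^2*R z" for z
  define U where "U z = a1 + z * V z" for z
  define T where "T z = b1 * R z + b2 * (2*a1*(a3 + z*R z) + (V z)^2)
      + b3 * V z * ((U z)^2 + a1 * U z + a1^2) + (U z)^4 * S (f z)" for z
  have "(T \<longlongrightarrow> b1 * c + b2 * (2*a1*(a3 + 0*c) + (a2 + a3*0 + 0^2*c)^2)
      + b3 * (a2 + a3*0 + 0^2*c) * ((a1 + 0*(a2 + a3*0 + 0^2*c))^2
        + a1 * (a1 + 0*(a2 + a3*0 + 0^2*c)) + a1^2)
      + (a1 + 0*(a2 + a3*0 + 0^2*c))^4 * S 0) (at 0)"
    unfolding T_def U_def V_def by (intro tendsto_intros R isCont_tendsto_compose[OF S lim])
  moreover have "\<forall>\<^sub>F z in at 0. g (f z) = b0 + (b1*a1)*z + (b1*a2 + b2*a1^2)*z^2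
      + (b1*a3 + 2*b2*a1*a2 + b3*a1^3)*z^3 + z^4 * T z"
    using ev eventually_compose_filterlim[OF evg lim]
  proof eventually_elim
    case (elim z)
    have "f z = z * U z" using elim(1) by (simp add: U_def V_def algebra_simps power_numeral_reduce)
    then show ?case unfolding elim(2) T_def U_def V_def by algebra
  qed
  ultimately show ?thesis unfolding expands3_def by blast
qed

lemma holomorphic_taylor3_at:
  assumes holo: "g holomorphic_on ball w0 r" and "r > 0"
  shows "taylor3_at g w0 (g w0) (deriv g w0) ((deriv ^^ 2) g w0 / 2) ((deriv ^^ 3) g w0 / 6)"
proof -
  define c where "c n = (deriv ^^ n) g w0 / fact n" for n
  have sums: "(\<lambda>n. c n * (w-w0)^n) sums g w" if "w \<in> ball w0 r" for w
    using holomorphic_power_series[OF holo that] unfolding c_def .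
  define K where "K = complex_of_real (r/2)"
  have K: "w0 + K \<in> ball w0 r" "K \<noteq> 0" using \<open>r > 0\<close> by (simp_all add: K_def dist_norm)
  have "summable (\<lambda>n. c (n+4) * K^(n+4) / K^4)"
    using summable_ignore_initial_segment[OF sums_summable[OF sums[OF K(1)]], of 4]
    by (simp add: summable_divide)
  then have "summable (\<lambda>n. c (n+4) * K^n)" using K(2) by (simp add: power_add)
  define P where "P x = (\<Sum>n. c (n+4) * x^n)" for x
  have "isCont P ((\<lambda>w. w - w0) w0)" unfolding P_def
    by (simp, rule isCont_powser[OF \<open>summable (\<lambda>n. c (n+4) * K^n)\<close>]) (use K(2) in simp)
  moreover have "isCont (\<lambda>w. w - w0) w0" by (intro continuous_intros)
  ultimately have cont: "isCont (\<lambda>w. P (w - w0)) w0" by (metis isCont_o2)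
  have eq: "g w = c 0 + c 1 * (w-w0) + c 2 * (w-w0)^2 + c 3 * (w-w0)^3 + (w-w0)^4 * P (w - w0)"
    if w: "w \<in> ball w0 r" for w
  proof (cases "w = w0")
    case True then show ?thesis by (simp add: c_def)
  next
    case False
    define x where "x = w - w0"
    have x: "x \<noteq> 0" using False by (simp add: x_def)
    have "(\<lambda>n. c (n+4) * x^(n+4) / x^4) sums ((g w - (\<Sum>i<4. c i * x^i)) / x^4)"
      using sums_divide[OF sums_split_initial_segment[OF sums[OF w], of 4]] by (simp add: x_def)
    then have "P x = (g w - (\<Sum>i<4. c i * x^i)) / x^4"
      unfolding P_def using x by (simp add: power_add sums_iff)
    then have "g w = (\<Sum>i<4. c i * x^i) + x^4 * P x" using x by (simp add: field_simps)
    then show ?thesis by (simp add: x_def numeral_eq_Suc lessThan_Suc algebra_simps)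
  qed
  have "\<forall>\<^sub>F w in nhds w0.
      g w = c 0 + c 1 * (w-w0) + c 2 * (w-w0)^2 + c 3 * (w-w0)^3 + (w-w0)^4 * P (w - w0)"
    unfolding eventually_nhds using \<open>r > 0\<close> eq by (intro exI[of _ "ball w0 r"]) auto
  then show ?thesis using cont unfolding taylor3_at_def c_def by (auto simp: fact_numeral)
qed

lemma holomorphic_taylor2_at:
  assumes "g holomorphic_on ball w0 r" "r > 0"
  shows "taylor2_at g w0 (g w0) (deriv g w0) (deriv (deriv g) w0 / 2)"
  using taylor3_at_imp_taylor2_at[OF holomorphic_taylor3_at[OF assms]] by (simp add: numeral_eq_Suc)

lemma holomorphic_expands3:
  assumes "g holomorphic_on ball 0 r" "r > 0"
  shows "expands3 g (g 0) (taylor_coeff g 1) (taylor_coeff g 2) (taylor_coeff g 3)"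
  using taylor3_at_0_imp_expands3[OF holomorphic_taylor3_at[OF assms]]
  by (simp add: taylor_coeff_def fact_numeral)

lemma holomorphic_expands2:
  assumes "g holomorphic_on ball 0 r" "r > 0"
  shows "expands2 g (g 0) (taylor_coeff g 1) (taylor_coeff g 2)"
  using expands3_imp_expands2[OF holomorphic_expands3[OF assms]] .

lemma taylor2_at_inverse:
  assumes "a \<noteq> (0::complex)" shows "taylor2_at (\<lambda>w. 1 / w) a (1/a) (-1/a^2) (1/a^3)"
proof -
  have "isCont (\<lambda>w. - 1 / (a^3 * w)) a" using assms by (intro continuous_intros) auto
  moreover have "\<forall>\<^sub>F w in nhds a. w \<noteq> 0" using assms by (intro t1_space_nhds) auto
  then have "\<forall>\<^sub>F w in nhds a.
      1 / w = 1/a + (-1/a^2)*(w-a) + (1/a^3)*(w-a)^2 + (w-a)^3 * (- 1 / (a^3 * w))"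
    by eventually_elim
      (use assms in \<open>simp add: field_simps, simp add: algebra_simps power_numeral_reduce\<close>)
  ultimately show ?thesis unfolding taylor2_at_def by blast
qed

lemma taylor2_at_powr: "taylor2_at (\<lambda>w. w powr s) 1 1 s (s*(s-1)/2)"
proof -
  have nonpos: "w \<notin> \<real>\<^sub>\<le>\<^sub>0" if "w \<in> ball 1 1" for w :: complex
  proof -
    have "\<bar>Re (1 - w)\<bar> < 1" using that abs_Re_le_cmod[of "1 - w"] by (simp add: dist_norm)
    then show ?thesis by (simp add: complex_nonpos_Reals_iff)
  qed
  have d1: "((\<lambda>w. w powr s) has_field_derivative s * w powr (s - 1)) (at w)" if "w \<in> ball 1 1" for w
    by (rule has_field_derivative_powr[OF nonpos[OF that]])
  have d2: "((\<lambda>w. s * w powr (s - 1)) has_field_derivative s * ((s - 1) * w powr (s - 1 - 1))) (at w)"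
    if "w \<in> ball 1 1" for w
    by (intro DERIV_cmult has_field_derivative_powr[OF nonpos[OF that]])
  have holo: "(\<lambda>w. w powr s) holomorphic_on ball 1 1"
    using d1 holomorphic_on_open by blast
  have "\<forall>\<^sub>F w in nhds 1. deriv (\<lambda>w. w powr s) w = s * w powr (s - 1)"
    unfolding eventually_nhds by (intro exI[of _ "ball 1 1"]) (auto intro: DERIV_imp_deriv d1)
  then have "deriv (deriv (\<lambda>w. w powr s)) 1 = deriv (\<lambda>w. s * w powr (s - 1)) 1"
    by (rule deriv_cong_ev) simp
  also have "\<dots> = s * (s - 1)" using DERIV_imp_deriv[OF d2[of 1]] by simp
  finally show ?thesis
    using holomorphic_taylor2_at[OF holo zero_less_one] DERIV_imp_deriv[OF d1[of 1]] by simp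
qed

lemma taylor2_at_ppow:
  "taylor2_at (\<lambda>w. ppow w a) 1 1 (of_real a) (of_real a * (of_real a - 1) / 2)"
proof (cases "a = 0")
  case True
  then show ?thesis unfolding taylor2_at_def ppow_def by (intro exI[of _ "\<lambda>_. 0"]) simp
next
  case False
  then show ?thesis using taylor2_at_powr[of "of_real a"] by (simp add: ppow_def)
qed

lemma expands2_ppow:
  assumes "expands2 f 1 x y"
  shows "expands2 (\<lambda>z. ppow (f z) a) 1 (of_real a * x)
           (of_real a * y + of_real a * (of_real a - 1) / 2 * x^2)"
  using expands2_compose[OF assms taylor2_at_ppow[of a]] by simp

lemma expands2_quotient:
  assumes "expands2 P 1 x y" "expands2 Q 2 0 (2*w)"
  shows "expands2 (\<lambda>z. 2 * P z / Q z) 1 x (y - w)"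
proof -
  have "expands2 (\<lambda>z. 1 / Q z) (1/2) 0 (- w / 2)"
    using expands2_compose[OF assms(2) taylor2_at_inverse[of 2]] by (rule expands2_eqI) auto
  from expands2_mult[OF expands2_mult[OF expands2_const assms(1)] this]
  show ?thesis by (rule expands2_eqI[OF expands2_cong]) (auto simp: algebra_simps)
qed

section \<open>q-numbers and the symmetric q-derivative\<close>

lemma q_minus_inverse_nonzero:
  fixes q :: real assumes "0 < q" "q \<noteq> 1" shows "q - 1/q \<noteq> 0"
proof
  assume "q - 1/q = 0"
  then have "(q - 1) * (q + 1) = 0" using assms(1) by (simp add: field_simps)
  with assms show False by simp
qed

lemma inverse_minus_self_pos:
  fixes q :: real assumes "0 < q" "q < 1" shows "1/q - q > 0"
proof -
  have "q * q < 1" using assms mult_strict_mono[of q 1 q 1] by simp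
  then show ?thesis using assms by (simp add: field_simps)
qed

lemma qnat_eq: assumes "0 < q" shows "qnat q n = (q^n - 1/q^n) / (q - 1/q)"
proof -
  have "qnum q (of_nat n) = complex_of_real ((q powr real n - q powr (- real n)) / (q - 1/q))"
    unfolding qnum_def using assms by (simp add: powr_of_real[symmetric])
  moreover have "q powr real n - q powr (- real n) = q^n - 1/q^n"
    using assms by (simp add: powr_minus powr_realpow divide_inverse)
  ultimately show ?thesis unfolding qnat_def by simp
qed

lemma qnat_2: assumes "0 < q" "q \<noteq> 1" shows "qnat q 2 = q + 1/q"
proof -
  have "q^2 - 1/q^2 = (q - 1/q) * (q + 1/q)"
    using assms by (simp add: field_simps power2_eq_square)
  then show ?thesis using q_minus_inverse_nonzero[OF assms] by (simp add: qnat_eq[OF assms(1)])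
qed

lemma qnat_3: assumes "0 < q" "q \<noteq> 1" shows "qnat q 3 = q^2 + 1 + 1/q^2"
proof -
  have "q^3 - 1/q^3 = (q - 1/q) * (q^2 + 1 + 1/q^2)"
    using assms by (simp add: field_simps power2_eq_square power3_eq_cube)
  then show ?thesis using q_minus_inverse_nonzero[OF assms] by (simp add: qnat_eq[OF assms(1)])
qed

lemma qnat_2_pos: "0 < q \<Longrightarrow> q \<noteq> 1 \<Longrightarrow> qnat q 2 > 0"
  by (simp add: qnat_2 add_pos_pos)

lemma qnat_3_gt_1: "0 < q \<Longrightarrow> q \<noteq> 1 \<Longrightarrow> qnat q 3 > 1"
  by (simp add: qnat_3 add_pos_pos)

lemma expands3_symqD:
  assumes q: "0 < q" "q \<noteq> 1" and H: "expands3 H 0 h1 h2 h3"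
  shows "expands2 (symqD q H) h1 (of_real (qnat q 2) * h2) (of_real (qnat q 3) * h3)"
proof -
  define Q where "Q = complex_of_real q"
  have Q0: "Q \<noteq> 0" using q by (simp add: Q_def)
  have D: "Q - 1/Q \<noteq> 0"
    using q_minus_inverse_nonzero[OF q] unfolding Q_def
    by (metis of_real_1 of_real_diff of_real_divide of_real_eq_0_iff)
  then have QQ: "Q * Q \<noteq> 1" using Q0 by (auto simp: field_simps)
  obtain R c where R: "(R \<longlongrightarrow> c) (at 0)"
    and ev: "\<forall>\<^sub>F z in at 0. H z = 0 + h1*z + h2*z^2 + h3*z^3 + z^4 * R z"
    using H unfolding expands3_def by blast
  have lim1: "filterlim (\<lambda>z. Q * z) (at 0) (at 0)" by (rule filterlim_scale_at_0[OF Q0])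
  have lim2: "filterlim (\<lambda>z. (1/Q) * z) (at 0) (at 0)" by (rule filterlim_scale_at_0) (use Q0 in simp)
  define T where "T z = (Q^4 * R (Q*z) - R (z/Q) / Q^4) / (Q - 1/Q)" for z
  have "((\<lambda>z. R (Q*z)) \<longlongrightarrow> c) (at 0)" "((\<lambda>z. R (z/Q)) \<longlongrightarrow> c) (at 0)"
    using filterlim_compose[OF R lim1] filterlim_compose[OF R lim2] by simp_all
  then have "(T \<longlongrightarrow> (Q^4 * c - c / Q^4) / (Q - 1/Q)) (at 0)"
    unfolding T_def by (intro tendsto_intros) (use Q0 D in auto)
  moreover have "\<forall>\<^sub>F z in at 0. symqD q H z
      = h1 + (of_real (qnat q 2) * h2)*z + (of_real (qnat q 3) * h3)*z^2 + z^3 * T z"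
    using eventually_compose_filterlim[OF ev lim1]
      eventually_compose_filterlim[OF ev lim2, unfolded mult.commute[of "1/Q"], simplified]
      eventually_at_0_nonzero
  proof eventually_elim
    case (elim z)
    have "symqD q H z = (H (Q*z) - H (z/Q)) / ((Q - 1/Q) * z)"
      using elim(3) by (simp add: symqD_def Q_def)
    also have "\<dots> = h1 + ((Q + 1/Q)*h2)*z + ((Q^2 + 1 + 1/Q^2)*h3)*z^2 + z^3 * T z"
      unfolding elim(1) elim(2) T_def using elim(3) Q0 QQ D
      by (simp add: field_simps) (simp add: algebra_simps power_numeral_reduce)
    finally show ?case by (simp add: Q_def qnat_2[OF q] qnat_3[OF q])
  qed
  ultimately show ?thesis unfolding expands2_def by blast
qed

lemma norm_qnum_ge:
  assumes q: "0 < q" "q < 1"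
  shows "cmod (qnum q c) \<ge> (q powr (- Re c) - q powr Re c) / (1/q - q)"
proof -
  define Q where "Q = complex_of_real q"
  have "cmod (Q powr c) = q powr Re c" "cmod (Q powr (-c)) = q powr (- Re c)"
    unfolding Q_def using q by (simp_all add: norm_powr_real_powr)
  then have num: "q powr (- Re c) - q powr Re c \<le> cmod (Q powr c - Q powr (-c))"
    using norm_triangle_ineq3[of "Q powr (-c)" "Q powr c"] by (simp add: norm_minus_commute)
  have pos: "1/q - q > 0" by (rule inverse_minus_self_pos[OF q])
  moreover have "cmod (complex_of_real (q - 1/q)) = 1/q - q"
    by (simp only: norm_of_real) (use pos in simp)
  ultimately show ?thesis
    unfolding qnum_def Q_def[symmetric] norm_divide using num by (simp add: divide_right_mono)
qed

lemma norm_qnum_ge_1: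
  assumes q: "0 < q" "q < 1" and "Re c \<ge> 1"
  shows "cmod (qnum q c) \<ge> 1"
proof -
  have pos: "1/q - q > 0" by (rule inverse_minus_self_pos[OF q])
  have "q powr (-1) \<le> q powr (- Re c)" by (rule powr_mono') (use q assms(3) in auto)
  moreover have "q powr Re c \<le> q" by (rule powr_le_one_le) (use q assms(3) in auto)
  ultimately
  have "1/q - q \<le> q powr (- Re c) - q powr Re c" using q by (simp add: powr_minus_divide)
  then have "1 \<le> (q powr (- Re c) - q powr Re c) / (1/q - q)" using pos by simp
  then show ?thesis using norm_qnum_ge[OF q, of c] by linarith
qed

lemma qnum_nonzero:
  assumes q: "0 < q" "q < 1" and "Re c > 0"
  shows "qnum q c \<noteq> 0"
proof -
  have pos: "1/q - q > 0" by (rule inverse_minus_self_pos[OF q])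
  have "q powr Re c < q powr (- Re c)" using q assms(3) by (intro powr_less_mono') auto
  then have "0 < (q powr (- Re c) - q powr Re c) / (1/q - q)" using pos by simp
  then show ?thesis using norm_qnum_ge[OF q, of c] by auto
qed

section \<open>The generalized Bernardi operator\<close>

lemma norm_bern_L_le:
  assumes q: "0 < q" "q < 1" and "Re \<eta> > -1" "n \<ge> 2"
  shows "cmod (bern_L q \<eta> n) \<le> cmod (qnum q (1 + \<eta>))"
proof -
  have "cmod (qnum q (of_nat n + \<eta>)) \<ge> 1" by (rule norm_qnum_ge_1[OF q]) (use assms in simp)
  then show ?thesis unfolding bern_L_def norm_divide
    by (simp add: divide_le_eq mult_le_cancel_left1 order_trans[OF _ mult_left_mono])
qed

lemma bern_L_nonzero:
  assumes q: "0 < q" "q < 1" and "Re \<eta> > -1" "n \<ge> 1"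
  shows "bern_L q \<eta> n \<noteq> 0"
  using qnum_nonzero[OF q, of "1 + \<eta>"] qnum_nonzero[OF q, of "of_nat n + \<eta>"] assms
  by (simp add: bern_L_def)

lemma summable_norm_taylor_coeff:
  assumes holo: "f holomorphic_on ball 0 1" and "cmod z < 1"
  shows "summable (\<lambda>n. norm (taylor_coeff f n * z^n))"
proof -
  define w where "w = complex_of_real ((1 + cmod z) / 2)"
  have "cmod w = (1 + cmod z) / 2" unfolding w_def by (simp only: norm_of_real) simp
  then have w: "w \<in> ball 0 1" "cmod z < cmod w" using assms(2) by simp_all
  have "(\<lambda>n. taylor_coeff f n * (w - 0)^n) sums f w"
    using holomorphic_power_series[OF holo w(1)] unfolding taylor_coeff_def .
  then have "summable (\<lambda>n. taylor_coeff f n * w^n)" by (simp add: sums_iff)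
  then show ?thesis by (rule powser_insidea) (use w in simp)
qed

lemma summable_bernardi_terms:
  assumes q: "0 < q" "q < 1" and \<eta>: "Re \<eta> > -1"
    and holo: "f holomorphic_on ball 0 1" and z: "cmod z < 1"
  shows "summable (\<lambda>n. bern_L q \<eta> (n+2) * taylor_coeff f (n+2) * z^(n+2))"
proof (rule summable_norm_cancel, rule summable_comparison_test)
  define C where "C = cmod (qnum q (1 + \<eta>))"
  show "summable (\<lambda>n. C * norm (taylor_coeff f (n+2) * z^(n+2)))"
    using summable_ignore_initial_segment[OF summable_norm_taylor_coeff[OF holo z], of 2]
    by (rule summable_mult)
  have "cmod (bern_L q \<eta> (n+2)) \<le> C" for n
    unfolding C_def by (rule norm_bern_L_le[OF q \<eta>]) simp
  then show "\<exists>N. \<forall>n\<ge>N. norm (norm (bern_L q \<eta> (n+2) * taylor_coeff f (n+2) * z^(n+2)))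
      \<le> C * norm (taylor_coeff f (n+2) * z^(n+2))"
    by (auto simp: norm_mult mult.assoc mult_right_mono)
qed

lemma expands3_bernardi:
  assumes q: "0 < q" "q < 1" and \<eta>: "Re \<eta> > -1" and holo: "f holomorphic_on ball 0 1"
  shows "expands3 (bernardi q \<eta> f) 0 1
           (bern_L q \<eta> 2 * taylor_coeff f 2) (bern_L q \<eta> 3 * taylor_coeff f 3)"
proof -
  define c where "c n = bern_L q \<eta> n * taylor_coeff f n" for n
  have sum2: "summable (\<lambda>n. c (n+2) * z^(n+2))" if "cmod z < 1" for z
    using summable_bernardi_terms[OF q \<eta> holo that] by (simp add: c_def)
  have sum4: "summable (\<lambda>n. c (n+4) * z^n)" if "cmod z < 1" "z \<noteq> 0" for z
  proof -
    have shift: "n + 2 + 2 = n + 4" for n :: nat by simp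
    have "summable (\<lambda>n. c (n+4) * z^(n+4))"
      using summable_ignore_initial_segment[OF sum2[OF that(1)], of 2] unfolding shift .
    then have "summable (\<lambda>n. c (n+4) * z^(n+4) / z^4)" by (rule summable_divide)
    then show ?thesis using that(2) by (simp add: power_add)
  qed
  define R where "R z = (\<Sum>n. c (n+4) * z^n)" for z
  have "isCont R 0" unfolding R_def by (rule isCont_powser[OF sum4[of "1/2"]]) auto
  have eq: "bernardi q \<eta> f z = 0 + 1*z + c 2 * z^2 + c 3 * z^3 + z^4 * R z"
    if "cmod z < 1" "z \<noteq> 0" for z
  proof -
    have "(\<Sum>n. c (n+2) * z^(n+2))
        = (\<Sum>n. c (n+2+2) * z^(n+2+2)) + (\<Sum>i<2. c (i+2) * z^(i+2))"
      by (rule suminf_split_initial_segment[OF sum2[OF that(1)]])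
    also have "(\<Sum>n. c (n+2+2) * z^(n+2+2)) = (\<Sum>n. z^4 * (c (n+4) * z^n))"
      by (rule suminf_cong) (simp add: power_add mult_ac numeral_eq_Suc)
    also have "\<dots> = z^4 * R z" unfolding R_def by (rule suminf_mult[OF sum4[OF that]])
    finally show ?thesis
      unfolding bernardi_def c_def by (simp add: numeral_eq_Suc lessThan_Suc algebra_simps)
  qed
  have "\<forall>\<^sub>F z in at 0. bernardi q \<eta> f z = 0 + 1*z + c 2 * z^2 + c 3 * z^3 + z^4 * R z"
    unfolding eventually_at_filter eventually_nhds by (intro exI[of _ "ball 0 1"]) (auto simp: eq)
  with \<open>isCont R 0\<close> show ?thesis unfolding expands3_def c_def isCont_def by blast
qed

section \<open>Expansion of the defining expression\<close>

text \<open>In the notation of the paper these are \<open>\<lambda>[2]\<^sub>q M\<^sub>2 L\<^sub>2\<close>, \<open>(\<lambda>[3]\<^sub>q - 1) M\<^sub>3 L\<^sub>3\<close> and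
  \<open>\<lambda>(\<lambda>M\<^sub>2\<^sup>2 - N)[2]\<^sub>q\<^sup>2 L\<^sub>2\<^sup>2 / 2\<close>.\<close>

definition class_coeff_a2 :: "real \<Rightarrow> complex \<Rightarrow> real \<Rightarrow> real \<Rightarrow> complex" where
  "class_coeff_a2 q \<eta> \<mu> lam =
     of_real (lam * qnat q 2 * (\<mu> - (\<mu> - 1) * qnat q 2)) * bern_L q \<eta> 2"

definition class_coeff_a3 :: "real \<Rightarrow> complex \<Rightarrow> real \<Rightarrow> real \<Rightarrow> complex" where
  "class_coeff_a3 q \<eta> \<mu> lam =
     of_real ((lam * qnat q 3 - 1) * (\<mu> - (\<mu> - 1) * qnat q 3)) * bern_L q \<eta> 3"

definition class_coeff_a2sq :: "real \<Rightarrow> complex \<Rightarrow> real \<Rightarrow> real \<Rightarrow> complex" where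
  "class_coeff_a2sq q \<eta> \<mu> lam =
     of_real (lam * (lam * (\<mu> - (\<mu> - 1) * qnat q 2)^2 - (\<mu> - (\<mu> - 1) * (qnat q 2)^2))
       * (qnat q 2)^2 / 2) * (bern_L q \<eta> 2)^2"

lemma norm_class_coeff_a2:
  assumes "0 < q" "q \<noteq> 1" "lam \<ge> 0"
  shows "cmod (class_coeff_a2 q \<eta> \<mu> lam)
           = lam * \<bar>\<mu> - (\<mu> - 1) * qnat q 2\<bar> * cmod (bern_L q \<eta> 2) * qnat q 2"
  using qnat_2_pos[OF assms(1,2)] assms(3)
  unfolding class_coeff_a2_def norm_mult norm_of_real by (simp add: abs_mult)

lemma norm_class_coeff_a3:
  assumes "0 < q" "q \<noteq> 1" "lam \<ge> 1"
  shows "cmod (class_coeff_a3 q \<eta> \<mu> lam)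
           = (lam * qnat q 3 - 1) * \<bar>\<mu> - (\<mu> - 1) * qnat q 3\<bar> * cmod (bern_L q \<eta> 3)"
proof -
  have "1 * qnat q 3 \<le> lam * qnat q 3"
    using qnat_3_gt_1[OF assms(1,2)] assms(3) by (intro mult_right_mono) auto
  then have "lam * qnat q 3 - 1 > 0" using qnat_3_gt_1[OF assms(1,2)] by linarith
  then show ?thesis unfolding class_coeff_a3_def norm_mult norm_of_real by (simp add: abs_mult)
qed

lemma expands2_starlike_factor:
  fixes lam :: real
  assumes q: "0 < q" "q \<noteq> 1" and F: "expands3 F 0 1 A2 A3"
  defines "l \<equiv> complex_of_real lam" and "Q2 \<equiv> complex_of_real (qnat q 2)"
    and "Q3 \<equiv> complex_of_real (qnat q 3)"
  shows "expands2 (\<lambda>z. 2 * ppow (symqD q F z) lam / odd_quot F z) 1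
           (l*Q2*A2) (l*Q3*A3 + l*(l-1)/2*Q2^2*A2^2 - A3)"
proof (rule expands2_quotient)
  show "expands2 (\<lambda>z. ppow (symqD q F z) lam) 1 (l*Q2*A2) (l*Q3*A3 + l*(l-1)/2*Q2^2*A2^2)"
    using expands2_ppow[OF expands3_symqD[OF q F], of lam]
    by (rule expands2_eqI) (simp_all add: l_def Q2_def Q3_def algebra_simps power2_eq_square)
  define H where "H t = F t - F (-t)" for t
  have "expands3 H 0 2 0 (2*A3)"
    using expands3_diff[OF F expands3_reflect[OF F]] unfolding H_def[symmetric]
    by (rule expands3_eqI) simp_all
  then show "expands2 (odd_quot F) 2 0 (2*A3)"
  proof (rule expands2_cong[OF expands3_divide_ident])
    show "\<forall>\<^sub>F z in at 0. H z / z = odd_quot F z"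
      using eventually_at_0_nonzero by eventually_elim (simp add: odd_quot_def H_def)
  qed
qed

lemma expands2_convex_factor:
  fixes lam :: real
  assumes q: "0 < q" "q \<noteq> 1" and F: "expands3 F 0 1 A2 A3"
  defines "l \<equiv> complex_of_real lam" and "Q2 \<equiv> complex_of_real (qnat q 2)"
    and "Q3 \<equiv> complex_of_real (qnat q 3)"
  shows "expands2 (\<lambda>z. 2 * ppow (symqD q (\<lambda>t. t * symqD q F t) z) lam / symqD q (\<lambda>t. F t - F (-t)) z)
           1 (l*Q2^2*A2) (l*Q3^2*A3 + l*(l-1)/2*Q2^4*A2^2 - Q3*A3)"
proof (rule expands2_quotient)
  have "expands3 (\<lambda>t. t * symqD q F t) 0 1 (Q2*A2) (Q3*A3)"
    using expands2_mult_ident[OF expands3_symqD[OF q F]] unfolding Q2_def Q3_def .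
  from expands2_ppow[OF expands3_symqD[OF q this], of lam]
  show "expands2 (\<lambda>z. ppow (symqD q (\<lambda>t. t * symqD q F t) z) lam) 1
      (l*Q2^2*A2) (l*Q3^2*A3 + l*(l-1)/2*Q2^4*A2^2)"
    unfolding Q2_def[symmetric] Q3_def[symmetric]
    by (rule expands2_eqI) (simp_all add: l_def algebra_simps power2_eq_square power4_eq_xxxx)
  have "expands3 (\<lambda>t. F t - F (-t)) 0 2 0 (2*A3)"
    using expands3_diff[OF F expands3_reflect[OF F]] by (rule expands3_eqI) simp_all
  from expands3_symqD[OF q this]
  show "expands2 (symqD q (\<lambda>t. F t - F (-t))) 2 0 (2*(Q3*A3))"
    unfolding Q3_def by (rule expands2_eqI) simp_all
qed

lemma expands2_class_expr:
  assumes q: "0 < q" "q < 1" and \<eta>: "Re \<eta> > -1" and holo: "f holomorphic_on ball 0 1"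
  shows "expands2 (class_expr q \<mu> lam (bernardi q \<eta> f)) 1
           (class_coeff_a2 q \<eta> \<mu> lam * taylor_coeff f 2)
           (class_coeff_a3 q \<eta> \<mu> lam * taylor_coeff f 3
              + class_coeff_a2sq q \<eta> \<mu> lam * (taylor_coeff f 2)^2)"
proof -
  define A2 where "A2 = bern_L q \<eta> 2 * taylor_coeff f 2"
  define A3 where "A3 = bern_L q \<eta> 3 * taylor_coeff f 3"
  define Q2 where "Q2 = complex_of_real (qnat q 2)"
  define Q3 where "Q3 = complex_of_real (qnat q 3)"
  define l where "l = complex_of_real lam"
  have q': "0 < q" "q \<noteq> 1" using q by simp_all
  have F: "expands3 (bernardi q \<eta> f) 0 1 A2 A3"
    unfolding A2_def A3_def by (rule expands3_bernardi[OF q \<eta> holo])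
  have "1 * (of_real (1 - \<mu>) * (l*Q2^2*A2)) + of_real \<mu> * (l*Q2*A2) * 1
      = class_coeff_a2 q \<eta> \<mu> lam * taylor_coeff f 2"
    unfolding class_coeff_a2_def A2_def Q2_def l_def by (simp add: algebra_simps power2_eq_square)
  moreover have "1 * (of_real (1 - \<mu>) * (l*Q3^2*A3 + l*(l-1)/2*Q2^4*A2^2 - Q3*A3)
        + of_real (1 - \<mu>) * (of_real (1 - \<mu>) - 1) / 2 * (l*Q2^2*A2)^2)
      + of_real \<mu> * (l*Q2*A2) * (of_real (1 - \<mu>) * (l*Q2^2*A2))
      + (of_real \<mu> * (l*Q3*A3 + l*(l-1)/2*Q2^2*A2^2 - A3)
        + of_real \<mu> * (of_real \<mu> - 1) / 2 * (l*Q2*A2)^2) * 1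
      = class_coeff_a3 q \<eta> \<mu> lam * taylor_coeff f 3
        + class_coeff_a2sq q \<eta> \<mu> lam * (taylor_coeff f 2)^2"
    unfolding class_coeff_a3_def class_coeff_a2sq_def A2_def A3_def Q2_def Q3_def l_def
    by (simp add: field_simps) algebra
  ultimately show ?thesis
    using expands2_mult[OF expands2_ppow[OF expands2_starlike_factor[OF q' F, where lam = lam], of \<mu>]
        expands2_ppow[OF expands2_convex_factor[OF q' F, where lam = lam], of "1 - \<mu>"], folded l_def Q2_def Q3_def]
    unfolding class_expr_def by simp
qed

section \<open>Schwarz functions and subordination\<close>

definition schwarz_bounded :: "complex \<Rightarrow> complex \<Rightarrow> bool" where
  "schwarz_bounded c1 c2 \<longleftrightarrow> cmod c1 \<le> 1 \<and> cmod c2 \<le> 1 - (cmod c1)^2"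

lemma expands2_linear:
  assumes "\<forall>z. cmod z < 1 \<longrightarrow> h z = \<alpha> * z" shows "expands2 h 0 \<alpha> 0"
proof -
  have "\<forall>\<^sub>F z in at 0. h z = 0 + \<alpha> * z + 0 * z^2 + z^3 * 0"
    unfolding eventually_at_filter eventually_nhds using assms
    by (intro exI[of _ "ball 0 1"]) auto
  then show ?thesis unfolding expands2_def by (intro exI[of _ "\<lambda>_. 0"] exI[of _ 0]) auto
qed

text \<open>Schwarz's lemma applied to the Moebius transform of \<open>k\<close> vanishing at the origin.\<close>

lemma Schwarz_Pick_deriv_0:
  assumes k: "k holomorphic_on ball 0 1" and kb: "\<forall>z\<in>ball 0 1. cmod (k z) < 1"
  shows "cmod (deriv k 0) \<le> 1 - (cmod (k 0))^2"
proof -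
  define c where "c = k 0"
  have c: "cmod c < 1" using kb by (simp add: c_def)
  define m where "m = Moebius_function 0 c \<circ> k"
  have m_holo: "m holomorphic_on ball 0 1"
    unfolding m_def by (rule holomorphic_on_compose_gen[OF k Moebius_function_holomorphic[OF c]])
      (use kb in auto)
  have m0: "m 0 = 0" by (simp add: m_def c_def Moebius_function_eq_zero)
  have mb: "cmod (m z) < 1" if "cmod z < 1" for z
    using Moebius_function_norm_lt_1[OF c] kb that by (simp add: m_def)
  have sq: "cnj c * c = of_real ((cmod c)^2)"
    using complex_norm_square[of c] by (simp only: mult.commute)
  have pos: "1 - (cmod c)^2 > 0" using c by (simp add: abs_square_less_1)
  then have nz: "cnj c * c \<noteq> 1" unfolding sq of_real_eq_1_iff by linarith
  have "(m has_field_derivative ((deriv k 0 - 0) * (1 - cnj c * k 0) - (k 0 - c) * (0 - cnj c * deriv k 0))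
      / ((1 - cnj c * k 0) * (1 - cnj c * k 0))) (at 0)"
    unfolding m_def o_def Moebius_function_simple using holomorphic_derivI[OF k open_ball, of 0]
    by (intro DERIV_divide DERIV_diff DERIV_cmult DERIV_const) (simp_all add: c_def[symmetric] nz)
  then have "deriv m 0 = deriv k 0 / of_real (1 - (cmod c)^2)"
    using nz by (simp add: c_def[symmetric] sq DERIV_imp_deriv)
  moreover have "cmod (deriv m 0) \<le> 1" using Schwarz_Lemma(2)[OF m_holo m0 mb, of 0] by simp
  ultimately have "cmod (deriv k 0) / (1 - (cmod c)^2) \<le> 1"
    by (simp only: norm_divide norm_of_real abs_of_pos[OF pos])
  then show ?thesis using pos by (simp add: divide_le_eq c_def)
qed

text \<open>Unless \<open>h\<close> is a rotation, \<open>h(z) = z k(z)\<close> with \<open>|k| < 1\<close>, \<open>k(0) = h'(0)\<close> and \<open>k'(0) = h''(0)/2\<close>.\<close>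

lemma schwarz_second_coeff_bound:
  assumes holo: "h holomorphic_on ball 0 1" and "h 0 = 0" and "\<forall>z\<in>ball 0 1. cmod (h z) < 1"
    and nonrot: "\<not> (\<exists>\<alpha>. \<forall>z. cmod z < 1 \<longrightarrow> h z = \<alpha> * z)"
  shows "cmod (taylor_coeff h 2) \<le> 1 - (cmod (taylor_coeff h 1))^2"
proof -
  have hb: "\<And>z. cmod z < 1 \<Longrightarrow> cmod (h z) < 1" using assms(3) by simp
  obtain k where k: "k holomorphic_on ball 0 1" and hk: "\<And>z. cmod z < 1 \<Longrightarrow> h z = z * k z"
    and "deriv h 0 = k 0"
    using Schwarz3[OF holo \<open>h 0 = 0\<close>] by blast
  have "expands2 h 0 (k 0) (taylor_coeff k 1)"
  proof (rule expands3_imp_expands2[OF expands3_cong])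
    show "expands3 (\<lambda>z. z * k z) 0 (k 0) (taylor_coeff k 1) (taylor_coeff k 2)"
      by (rule expands2_mult_ident[OF holomorphic_expands2[OF k zero_less_one]])
    show "\<forall>\<^sub>F z in at 0. z * k z = h z"
      using eventually_at_0_in_unit_ball by eventually_elim (simp add: hk)
  qed
  from expands2_unique[OF this holomorphic_expands2[OF holo zero_less_one, unfolded \<open>h 0 = 0\<close>]]
  have "k 0 = taylor_coeff h 1" "deriv k 0 = taylor_coeff h 2"
    by (simp_all add: taylor_coeff_def[of k])
  moreover have "cmod (k z) < 1" if "cmod z < 1" for z
  proof (cases "z = 0")
    case True
    then show ?thesis
      using Schwarz_Lemma(2,3)[OF holo \<open>h 0 = 0\<close> hb, of 0] nonrot \<open>deriv h 0 = k 0\<close>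
      by (metis norm_zero order_le_less zero_less_one)
  next
    case False
    have "cmod (h z) < cmod z"
      using Schwarz_Lemma(1,3)[OF holo \<open>h 0 = 0\<close> hb that] nonrot that False
      by (metis order_le_less)
    then show ?thesis using False hk[OF that] by (simp add: norm_mult)
  qed
  ultimately show ?thesis using Schwarz_Pick_deriv_0[OF k] by simp
qed

lemma schwarz_bounded_taylor_coeffs:
  assumes holo: "h holomorphic_on ball 0 1" and "h 0 = 0" and "\<forall>z\<in>ball 0 1. cmod (h z) < 1"
  shows "schwarz_bounded (taylor_coeff h 1) (taylor_coeff h 2)"
proof -
  have hb: "\<And>z. cmod z < 1 \<Longrightarrow> cmod (h z) < 1" using assms(3) by simp
  have "cmod (taylor_coeff h 1) \<le> 1"
    using Schwarz_Lemma(2)[OF holo \<open>h 0 = 0\<close> hb, of 0] by (simp add: taylor_coeff_def)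
  moreover have "cmod (taylor_coeff h 2) \<le> 1 - (cmod (taylor_coeff h 1))^2"
  proof (cases "\<exists>\<alpha>. \<forall>z. cmod z < 1 \<longrightarrow> h z = \<alpha> * z")
    case True
    then obtain \<alpha> where lin: "\<forall>z. cmod z < 1 \<longrightarrow> h z = \<alpha> * z" by blast
    have "taylor_coeff h 1 = \<alpha>" "taylor_coeff h 2 = 0"
      using expands2_unique[OF holomorphic_expands2[OF holo zero_less_one] expands2_linear[OF lin]]
      by simp_all
    then show ?thesis using calculation by (simp add: abs_square_le_1)
  next
    case False
    then show ?thesis by (rule schwarz_second_coeff_bound[OF assms])
  qed
  ultimately show ?thesis unfolding schwarz_bounded_def ..
qed

lemma subord_coeffs:
  assumes "subord P \<phi>" and holo: "\<phi> holomorphic_on ball 0 1" and P: "expands2 P p0 p1 p2"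
  obtains c1 c2 where "schwarz_bounded c1 c2" and "p1 = taylor_coeff \<phi> 1 * c1"
    and "p2 = taylor_coeff \<phi> 1 * c2 + taylor_coeff \<phi> 2 * c1^2"
proof -
  obtain h where h: "h holomorphic_on ball 0 1" "h 0 = 0" "\<forall>z\<in>ball 0 1. cmod (h z) < 1"
    and eq: "\<forall>z\<in>ball 0 1. P z = \<phi> (h z)"
    using assms(1) unfolding subord_def by blast
  have "expands2 (\<lambda>z. \<phi> (h z)) (\<phi> 0) (taylor_coeff \<phi> 1 * taylor_coeff h 1)
      (taylor_coeff \<phi> 1 * taylor_coeff h 2 + taylor_coeff \<phi> 2 * (taylor_coeff h 1)^2)"
    using expands2_compose[OF holomorphic_expands2[OF h(1) zero_less_one, unfolded h(2)]
        holomorphic_taylor2_at[OF holo zero_less_one]]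
    by (simp add: h(2) taylor_coeff_def numeral_eq_Suc)
  moreover have "\<forall>\<^sub>F z in at 0. \<phi> (h z) = P z"
    using eventually_at_0_in_unit_ball by eventually_elim (simp add: eq)
  ultimately have "expands2 P (\<phi> 0) (taylor_coeff \<phi> 1 * taylor_coeff h 1)
      (taylor_coeff \<phi> 1 * taylor_coeff h 2 + taylor_coeff \<phi> 2 * (taylor_coeff h 1)^2)"
    by (rule expands2_cong)
  with P show ?thesis
    using that[OF schwarz_bounded_taylor_coeffs[OF h(1-3)]] expands2_unique by blast
qed

lemma inverse_taylor_coeffs:
  assumes holo: "f holomorphic_on ball 0 1" and "f 0 = 0" "deriv f 0 = 1" and "inv_ext f g"
  shows "taylor_coeff g 2 = - taylor_coeff f 2"
    and "taylor_coeff g 3 = 2 * (taylor_coeff f 2)^2 - taylor_coeff f 3"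
proof -
  have g: "g holomorphic_on ball 0 1" and gf: "\<forall>z\<in>ball 0 1. f z \<in> ball 0 1 \<longrightarrow> g (f z) = z"
    using \<open>inv_ext f g\<close> unfolding inv_ext_def by auto
  have f: "expands3 f 0 1 (taylor_coeff f 2) (taylor_coeff f 3)"
    using holomorphic_expands3[OF holo zero_less_one] assms(2,3) by (simp add: taylor_coeff_def)
  have "(f \<longlongrightarrow> 0) (at 0)" by (rule expands2_tendsto[OF expands3_imp_expands2[OF f]])
  then have "\<forall>\<^sub>F z in at 0. f z \<in> ball 0 1" by (rule topological_tendstoD) auto
  then have "\<forall>\<^sub>F z in at 0. z = g (f z)"
    using eventually_at_0_in_unit_ball by eventually_elim (use gf in auto)
  then have ident: "expands3 (\<lambda>z. g (f z)) 0 1 0 0" by (rule expands3_cong[OF expands3_ident])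
  have "expands3 (\<lambda>z. g (f z)) (g 0) (taylor_coeff g 1)
      (taylor_coeff g 1 * taylor_coeff f 2 + taylor_coeff g 2)
      (taylor_coeff g 1 * taylor_coeff f 3 + 2 * taylor_coeff g 2 * taylor_coeff f 2 + taylor_coeff g 3)"
    using expands3_compose[OF f holomorphic_taylor3_at[OF g zero_less_one]]
    by (simp add: taylor_coeff_def fact_numeral)
  from expands3_unique[OF this ident]
  have b2: "taylor_coeff f 2 + taylor_coeff g 2 = 0"
    and b3: "taylor_coeff f 3 + 2 * taylor_coeff g 2 * taylor_coeff f 2 + taylor_coeff g 3 = 0"
    by auto
  from b2 show g2: "taylor_coeff g 2 = - taylor_coeff f 2"
    by (simp add: eq_neg_iff_add_eq_0 add.commute)
  from b3 show "taylor_coeff g 3 = 2 * (taylor_coeff f 2)^2 - taylor_coeff f 3"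
    unfolding g2 by (simp add: algebra_simps power2_eq_square eq_neg_iff_add_eq_0)
qed

section \<open>Coefficient estimates\<close>

context
  fixes \<alpha> \<beta> K E1 E2 a2 a3 c1 c2 d1 d2 :: complex and e1 :: real
  assumes E1: "E1 = of_real e1" and e1: "e1 > 0"
    and c: "schwarz_bounded c1 c2" and d: "schwarz_bounded d1 d2"
    and f1: "\<alpha> * a2 = E1 * c1" and g1: "- \<alpha> * a2 = E1 * d1"
    and f2: "\<beta> * a3 + K * a2^2 = E1 * c2 + E2 * c1^2"
    and g2: "\<beta> * (2*a2^2 - a3) + K * a2^2 = E1 * d2 + E2 * d1^2"
begin

lemma bi_subord_d1_eq: "d1 = - c1"
proof -
  have "E1 * d1 = E1 * (- c1)" using f1 g1 by (metis minus_mult_left mult_minus_right)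
  moreover have "E1 \<noteq> 0" using E1 e1 by simp
  ultimately show ?thesis using mult_left_cancel by blast
qed

lemma bi_subord_norm_c2_d2: "cmod c2 + cmod d2 \<le> 2 - 2 * (cmod c1)^2"
  using c d bi_subord_d1_eq unfolding schwarz_bounded_def by simp

lemma bi_subord_bound_a2: "cmod \<alpha> * cmod a2 \<le> e1"
proof -
  have "cmod \<alpha> * cmod a2 = e1 * cmod c1" using arg_cong[OF f1, of cmod] E1 e1 by (simp add: norm_mult)
  also have "\<dots> \<le> e1" using c e1 unfolding schwarz_bounded_def by (simp add: mult_le_cancel_left1)
  finally show ?thesis .
qed

lemma bi_subord_bound_a2_sum:
  "cmod (2*\<beta> + 2*K) * (cmod a2)^2 \<le> 2 * (cmod (E2 - E1) + e1)"
proof -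
  have sum: "(2*\<beta> + 2*K) * a2^2 = E1 * (c2 + d2) + 2 * E2 * c1^2"
    using arg_cong2[OF f2 g2, of "(+)"] bi_subord_d1_eq by (simp add: algebra_simps)
  have c1: "(cmod c1)^2 \<le> 1" using c unfolding schwarz_bounded_def by (simp add: power_le_one)
  have E2: "cmod E2 \<le> cmod (E2 - E1) + e1" using norm_triangle_ineq[of "E2 - E1" E1] E1 e1 by simp
  have "cmod (2*\<beta> + 2*K) * (cmod a2)^2 = cmod (E1 * (c2 + d2) + 2 * E2 * c1^2)"
    using arg_cong[OF sum, of cmod] by (simp add: norm_mult norm_power)
  also have "\<dots> \<le> cmod (E1 * (c2 + d2)) + cmod (2 * E2 * c1^2)" by (rule norm_triangle_ineq)
  also have "\<dots> \<le> e1 * (cmod c2 + cmod d2) + 2 * cmod E2 * (cmod c1)^2"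
    using norm_triangle_ineq[of c2 d2] E1 e1 by (simp add: norm_mult norm_power mult_left_mono)
  also have "\<dots> \<le> e1 * (2 - 2 * (cmod c1)^2) + 2 * (cmod (E2 - E1) + e1) * (cmod c1)^2"
    using bi_subord_norm_c2_d2 E2 e1 by (intro add_mono mult_left_mono mult_right_mono) auto
  also have "\<dots> \<le> 2 * (cmod (E2 - E1) + e1)"
    using mult_left_mono[OF c1, of "cmod (E2 - E1)"] by (simp add: algebra_simps)
  finally show ?thesis .
qed

lemma bi_subord_bound_a2_theta:
  "cmod (E1^2 * (2*\<beta> + 2*K) + 2*(E1 - E2)*\<alpha>^2) * (cmod a2)^2 \<le> 2 * e1^3"
proof -
  have "(E1^2 * (2*\<beta> + 2*K) + 2*(E1 - E2)*\<alpha>^2) * a2^2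
      = E1^2 * ((2*\<beta> + 2*K) * a2^2) + 2*(E1 - E2) * (\<alpha> * a2)^2"
    by (simp add: algebra_simps power2_eq_square)
  also have "\<dots> = E1^3 * (c2 + d2 + 2 * c1^2)"
    using arg_cong2[OF f2 g2, of "(+)"] bi_subord_d1_eq unfolding f1
    by (simp add: algebra_simps power2_eq_square power3_eq_cube)
  finally have th: "(E1^2 * (2*\<beta> + 2*K) + 2*(E1 - E2)*\<alpha>^2) * a2^2 = E1^3 * (c2 + d2 + 2 * c1^2)" .
  have "cmod (E1^2 * (2*\<beta> + 2*K) + 2*(E1 - E2)*\<alpha>^2) * (cmod a2)^2
      = e1^3 * cmod (c2 + d2 + 2 * c1^2)"
    using arg_cong[OF th, of cmod] E1 e1 by (simp add: norm_mult norm_power)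
  also have "\<dots> \<le> e1^3 * 2"
  proof -
    have "cmod (c2 + d2 + 2 * c1^2) \<le> cmod c2 + cmod d2 + 2 * (cmod c1)^2"
      using norm_triangle_ineq[of "c2 + d2" "2 * c1^2"] norm_triangle_ineq[of c2 d2]
      by (simp add: norm_mult norm_power)
    then show ?thesis using bi_subord_norm_c2_d2 e1 by (intro mult_left_mono) auto
  qed
  finally show ?thesis by simp
qed

lemma bi_subord_bound_a3: "cmod \<beta> * cmod (a3 - a2^2) \<le> e1"
proof -
  have diff: "2 * \<beta> * (a3 - a2^2) = E1 * (c2 - d2)"
    using arg_cong2[OF f2 g2, of "(-)"] bi_subord_d1_eq by (simp add: algebra_simps)
  have "2 * (cmod \<beta> * cmod (a3 - a2^2)) = e1 * cmod (c2 - d2)"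
    using arg_cong[OF diff, of cmod] E1 e1 by (simp add: norm_mult)
  also have "\<dots> \<le> e1 * 2"
    using norm_triangle_ineq4[of c2 d2] bi_subord_norm_c2_d2 e1
    by (intro mult_left_mono) (auto simp: zero_le_power2 intro: order_trans)
  finally show ?thesis by simp
qed

end

lemma coeff_bounds_of_products:
  fixes x y z A B W T C e :: real
  assumes pos: "0 < A" "0 < B" "0 < W" "0 < T" "0 \<le> x" "0 < e"
    and "A * x \<le> e" "W * x^2 \<le> C" "T * x^2 \<le> 2 * e^3" "B * y \<le> e" "z \<le> y + x^2"
  shows "x \<le> min (e / A) (min (sqrt (C / W)) (e * sqrt (2 * e) / sqrt T))"
    and "z \<le> e / B + min (e^2 / A^2) (C / W)"
proof -
  have xA: "x \<le> e / A" using assms by (simp add: field_simps)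
  have xW: "x^2 \<le> C / W" using assms by (simp add: field_simps)
  have "x^2 \<le> 2 * e^3 / T" using assms by (simp add: field_simps)
  then have "x \<le> sqrt (2 * e^3 / T)" using real_le_rsqrt by blast
  also have "sqrt (2 * e^3 / T) = e * sqrt (2 * e) / sqrt T"
    using pos by (simp add: real_sqrt_divide real_sqrt_mult power3_eq_cube power2_eq_square[symmetric])
  finally show "x \<le> min (e / A) (min (sqrt (C / W)) (e * sqrt (2 * e) / sqrt T))"
    using xA real_le_rsqrt[OF xW] by simp
  have "x^2 \<le> (e / A)^2" using xA pos by (intro power_mono) auto
  then have "x^2 \<le> min (e^2 / A^2) (C / W)" using xW by (simp add: power_divide)
  moreover have "y \<le> e / B" using assms by (simp add: field_simps)
  ultimately show "z \<le> e / B + min (e^2 / A^2) (C / W)" using assms by linarith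
qed

lemma S_class_coeff_relations:
  assumes q: "0 < q" "q < 1" and \<eta>: "Re \<eta> > -1" and \<phi>: "\<phi> holomorphic_on ball 0 1"
    and "S_class q \<eta> \<mu> lam \<phi> f"
  defines "\<alpha> \<equiv> class_coeff_a2 q \<eta> \<mu> lam" and "\<beta> \<equiv> class_coeff_a3 q \<eta> \<mu> lam"
    and "K \<equiv> class_coeff_a2sq q \<eta> \<mu> lam" and "E \<equiv> taylor_coeff \<phi>"
    and "a2 \<equiv> taylor_coeff f 2" and "a3 \<equiv> taylor_coeff f 3"
  obtains c1 c2 d1 d2 where "schwarz_bounded c1 c2" "schwarz_bounded d1 d2"
    "\<alpha> * a2 = E 1 * c1" "- \<alpha> * a2 = E 1 * d1"
    "\<beta> * a3 + K * a2^2 = E 1 * c2 + E 2 * c1^2"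
    "\<beta> * (2*a2^2 - a3) + K * a2^2 = E 1 * d2 + E 2 * d1^2"
proof -
  have f: "f holomorphic_on ball 0 1" "f 0 = 0" "deriv f 0 = 1" and "\<exists>g. inv_ext f g"
    and sub_f: "subord (class_expr q \<mu> lam (bernardi q \<eta> f)) \<phi>"
    using \<open>S_class q \<eta> \<mu> lam \<phi> f\<close> unfolding S_class_def Sigma_class_def by auto
  then obtain g where "inv_ext f g" by blast
  then have g: "g holomorphic_on ball 0 1"
    and sub_g: "subord (class_expr q \<mu> lam (bernardi q \<eta> g)) \<phi>"
    using \<open>S_class q \<eta> \<mu> lam \<phi> f\<close> unfolding S_class_def inv_ext_def by auto
  obtain c1 c2 where "schwarz_bounded c1 c2" "\<alpha> * a2 = E 1 * c1"
    "\<beta> * a3 + K * a2^2 = E 1 * c2 + E 2 * c1^2"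
    using subord_coeffs[OF sub_f \<phi> expands2_class_expr[OF q \<eta> f(1)]]
    unfolding \<alpha>_def \<beta>_def K_def E_def a2_def a3_def by blast
  moreover obtain d1 d2 where "schwarz_bounded d1 d2" "\<alpha> * taylor_coeff g 2 = E 1 * d1"
    "\<beta> * taylor_coeff g 3 + K * (taylor_coeff g 2)^2 = E 1 * d2 + E 2 * d1^2"
    using subord_coeffs[OF sub_g \<phi> expands2_class_expr[OF q \<eta> g]]
    unfolding \<alpha>_def \<beta>_def K_def E_def by blast
  moreover have "taylor_coeff g 2 = - a2" "taylor_coeff g 3 = 2*a2^2 - a3"
    using inverse_taylor_coeffs[OF f \<open>inv_ext f g\<close>] unfolding a2_def a3_def by simp_all
  ultimately show thesis using that by simp
qed

lemma S_class_coeff_bounds: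
  assumes q: "0 < q" "q < 1" and \<eta>: "Re \<eta> > -1" and \<phi>: "\<phi> holomorphic_on ball 0 1"
    and f: "S_class q \<eta> \<mu> lam \<phi> f"
    and E1: "taylor_coeff \<phi> 1 = of_real e1" and "e1 > 0"
    and \<alpha>: "\<alpha> = class_coeff_a2 q \<eta> \<mu> lam" and \<beta>: "\<beta> = class_coeff_a3 q \<eta> \<mu> lam"
    and K: "K = class_coeff_a2sq q \<eta> \<mu> lam"
    and nonzero: "\<alpha> \<noteq> 0" "\<beta> \<noteq> 0" "2*\<beta> + 2*K \<noteq> 0"
      "(taylor_coeff \<phi> 1)^2 * (2*\<beta> + 2*K) + 2*(taylor_coeff \<phi> 1 - taylor_coeff \<phi> 2)*\<alpha>^2 \<noteq> 0"
  shows "cmod (taylor_coeff f 2)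
           \<le> min (e1 / cmod \<alpha>) (min (sqrt (2 * (cmod (taylor_coeff \<phi> 2 - taylor_coeff \<phi> 1) + e1)
                / cmod (2*\<beta> + 2*K)))
              (e1 * sqrt (2 * e1) / sqrt (cmod ((taylor_coeff \<phi> 1)^2 * (2*\<beta> + 2*K)
                + 2*(taylor_coeff \<phi> 1 - taylor_coeff \<phi> 2)*\<alpha>^2))))" (is ?a2)
    and "cmod (taylor_coeff f 3) \<le> e1 / cmod \<beta> + min (e1^2 / (cmod \<alpha>)^2)
           (2 * (cmod (taylor_coeff \<phi> 2 - taylor_coeff \<phi> 1) + e1) / cmod (2*\<beta> + 2*K))" (is ?a3)
proof -
  obtain c1 c2 d1 d2 where rel: "schwarz_bounded c1 c2" "schwarz_bounded d1 d2"
    "\<alpha> * taylor_coeff f 2 = taylor_coeff \<phi> 1 * c1" "- \<alpha> * taylor_coeff f 2 = taylor_coeff \<phi> 1 * d1"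
    "\<beta> * taylor_coeff f 3 + K * (taylor_coeff f 2)^2 = taylor_coeff \<phi> 1 * c2 + taylor_coeff \<phi> 2 * c1^2"
    "\<beta> * (2 * (taylor_coeff f 2)^2 - taylor_coeff f 3) + K * (taylor_coeff f 2)^2
       = taylor_coeff \<phi> 1 * d2 + taylor_coeff \<phi> 2 * d1^2"
    using S_class_coeff_relations[OF q \<eta> \<phi> f] unfolding \<alpha> \<beta> K by blast
  have pos: "0 < cmod \<alpha>" "0 < cmod \<beta>" "0 < cmod (2*\<beta> + 2*K)"
    "0 < cmod ((taylor_coeff \<phi> 1)^2 * (2*\<beta> + 2*K) + 2*(taylor_coeff \<phi> 1 - taylor_coeff \<phi> 2)*\<alpha>^2)"
    using nonzero zero_less_norm_iff by blast+
  have "cmod (taylor_coeff f 3)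
      \<le> cmod (taylor_coeff f 3 - (taylor_coeff f 2)^2) + (cmod (taylor_coeff f 2))^2"
    using norm_triangle_ineq2[of "taylor_coeff f 3" "(taylor_coeff f 2)^2"] by (simp add: norm_power)
  note bounds = coeff_bounds_of_products[OF pos norm_ge_zero \<open>e1 > 0\<close>
      bi_subord_bound_a2[OF E1 \<open>e1 > 0\<close> rel] bi_subord_bound_a2_sum[OF E1 \<open>e1 > 0\<close> rel]
      bi_subord_bound_a2_theta[OF E1 \<open>e1 > 0\<close> rel] bi_subord_bound_a3[OF E1 \<open>e1 > 0\<close> rel] this]
  show ?a2 by (fact bounds(1))
  show ?a3 by (fact bounds(2))
qed

theorem theorem2:
  fixes q \<mu> lam :: real and \<eta> :: complex and \<phi> f :: "complex \<Rightarrow> complex"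
    and E L :: "nat \<Rightarrow> complex" and M :: "nat \<Rightarrow> real" and N e1 :: real and \<Omega> \<Theta> :: complex
  defines "E \<equiv> taylor_coeff \<phi>"
    and "L \<equiv> bern_L q \<eta>"
    and "M \<equiv> (\<lambda>k. \<mu> - (\<mu> - 1) * qnat q k)"
    and "N \<equiv> \<mu> - (\<mu> - 1) * (qnat q 2)\<^sup>2"
    and "e1 \<equiv> Re (E 1)"
    and "\<Omega> \<equiv> complex_of_real (2 * (lam * qnat q 3 - 1) * M 3) * L 3
             + complex_of_real (lam * (lam * (M 2)\<^sup>2 - N) * (qnat q 2)\<^sup>2) * (L 2)\<^sup>2"
    and "\<Theta> \<equiv> complex_of_real (2 * (lam * qnat q 3 - 1) * M 3) * (E 1)\<^sup>2 * L 3
             + complex_of_real lam * (complex_of_real (lam * (M 2)\<^sup>2) * ((E 1)\<^sup>2 + 2 * E 1 - 2 * E 2)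
                 - complex_of_real N * (E 1)\<^sup>2) * complex_of_real ((qnat q 2)\<^sup>2) * (L 2)\<^sup>2"
  assumes "0 < q" and "q < 1" and "Re \<eta> > -1" and "\<mu> \<ge> 0" and "lam \<ge> 1"
    and "\<phi> holomorphic_on ball 0 1"
    and "\<forall>z\<in>ball 0 1. Re (\<phi> z) > 0"
    and "\<phi> 0 = 1"
    and "Im (E 1) = 0" and "Re (E 1) > 0"
    and "M 2 \<noteq> 0" and "M 3 \<noteq> 0" and "\<Omega> \<noteq> 0" and "\<Theta> \<noteq> 0"
    and "S_class q \<eta> \<mu> lam \<phi> f"
  shows "cmod (taylor_coeff f 2) \<le>
           min (e1 / (lam * \<bar>M 2\<bar> * cmod (L 2) * qnat q 2))
             (min (sqrt (2 * (cmod (E 2 - E 1) + e1) / cmod \<Omega>))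
                  (e1 * sqrt (2 * e1) / sqrt (cmod \<Theta>)))
         \<and> cmod (taylor_coeff f 3) \<le>
           e1 / ((lam * qnat q 3 - 1) * \<bar>M 3\<bar> * cmod (L 3))
           + min (e1\<^sup>2 / (lam\<^sup>2 * (M 2)\<^sup>2 * (qnat q 2)\<^sup>2 * (cmod (L 2))\<^sup>2))
                 (2 * (cmod (E 2 - E 1) + e1) / cmod \<Omega>)"
proof -
  define \<alpha> \<beta> K where "\<alpha> = class_coeff_a2 q \<eta> \<mu> lam" and "\<beta> = class_coeff_a3 q \<eta> \<mu> lam"
    and "K = class_coeff_a2sq q \<eta> \<mu> lam"
  have q: "0 < q" "q \<noteq> 1" using \<open>0 < q\<close> \<open>q < 1\<close> by simp_all
  have E1: "E 1 = of_real e1" and "e1 > 0"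
    using \<open>Im (E 1) = 0\<close> \<open>Re (E 1) > 0\<close> by (simp_all add: e1_def complex_eq_iff)
  have \<Omega>: "\<Omega> = 2 * \<beta> + 2 * K"
    and \<Theta>: "\<Theta> = (E 1)^2 * \<Omega> + 2 * (E 1 - E 2) * \<alpha>^2"
    unfolding \<Omega>_def \<Theta>_def \<alpha>_def \<beta>_def K_def class_coeff_a2_def class_coeff_a3_def class_coeff_a2sq_def
      M_def N_def L_def by (simp_all add: field_simps power2_eq_square)
  have n\<alpha>: "cmod \<alpha> = lam * \<bar>M 2\<bar> * cmod (L 2) * qnat q 2"
    using norm_class_coeff_a2[OF q, of lam \<eta> \<mu>] \<open>lam \<ge> 1\<close> unfolding \<alpha>_def M_def L_def by simp
  have n\<beta>: "cmod \<beta> = (lam * qnat q 3 - 1) * \<bar>M 3\<bar> * cmod (L 3)"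
    using norm_class_coeff_a3[OF q \<open>lam \<ge> 1\<close>, of \<eta> \<mu>] unfolding \<beta>_def M_def L_def by simp
  have "0 < cmod \<alpha>" "0 < cmod \<beta>"
    using \<open>M 2 \<noteq> 0\<close> \<open>M 3 \<noteq> 0\<close> \<open>lam \<ge> 1\<close> bern_L_nonzero[OF \<open>0 < q\<close> \<open>q < 1\<close> \<open>Re \<eta> > -1\<close>]
      qnat_2_pos[OF q] qnat_3_gt_1[OF q] mult_le_less_imp_less[of 1 lam 1 "qnat q 3"]
    unfolding n\<alpha> n\<beta> L_def by auto
  then have "\<alpha> \<noteq> 0" "\<beta> \<noteq> 0" by auto
  have sq: "(lam * \<bar>M 2\<bar> * cmod (L 2) * qnat q 2)^2
      = lam\<^sup>2 * (M 2)\<^sup>2 * (qnat q 2)\<^sup>2 * (cmod (L 2))\<^sup>2"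
    by (simp add: power_mult_distrib)
  show ?thesis
    using S_class_coeff_bounds[OF \<open>0 < q\<close> \<open>q < 1\<close> \<open>Re \<eta> > -1\<close> \<open>\<phi> holomorphic_on ball 0 1\<close>
        \<open>S_class q \<eta> \<mu> lam \<phi> f\<close> E1[unfolded E_def] \<open>e1 > 0\<close> \<alpha>_def \<beta>_def K_def, folded E_def \<Omega>,
        folded \<Theta>, OF \<open>\<alpha> \<noteq> 0\<close> \<open>\<beta> \<noteq> 0\<close> \<open>\<Omega> \<noteq> 0\<close> \<open>\<Theta> \<noteq> 0\<close>]
    unfolding n\<alpha> n\<beta> sq by (rule conjI)
qed

end
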